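(* Let $D$ be a (nondeterministic or stochastic) planning domain, let $\psi$ be an LTL formula or an LTL$_f$ formula over $AP=\mathcal{F}\cup\mathcal{A}$, and let $f$ be a finite-state policy. If $(D,f)\models A^{\text{sa-fair}}(\psi)$, then $(D,f)\models A^{=1}(\psi)$.
   Context: A nondeterministic planning domain is a tuple $D=(St,Act,s_0,Tr)$ with $St=2^{\mathcal{F}}$ a finite set of states (assignments to Boolean fluents $\mathcal{F}$), $Act=2^{\mathcal{A}}$ a finite set of actions (assignments to Boolean variables $\mathcal{A}$ disjoint from $\mathcal{F}$), initial state $s_0$, and transition relation $Tr\subseteq St\times Act\times St$; action $a$ is applicable in $s$ if $Tr(s,a)=\{s': (s,a,s')\in Tr\}\neq\emptyset$, and every state has an applicable action. A stochastic domain is a pair $(D,Pr)$ where $Pr(s,a)$ is a probability distribution on $St$ whose support equals $Tr(s,a)$, for each applicable $a$ in $s$. A trace is a finite or infinite sequence $(s_0\cup a_0)(s_1\cup a_1)\cdots$ over $2^{\mathcal{F}\cup\mathcal{A}}$ starting at $s_0$ with $(s_{i-1},a_{i-1},s_i)\in Tr$. A policy is a function $f:St^+\to Act$ with $f(u)$ applicable in the last state of $u$; a trace is an $f$-trace if $f(s_0\cdots s_i)=a_i$ for every prefix. A finite-state policy is one computed by a finite-state input/output automaton. LTL has the usual syntax ($p$, $\neg$, $\wedge$, $X$ (next), $U$ (until)) and semantics over infinite sequences over $2^{AP}$; LTL$_f$ has the same syntax interpreted over finite sequences, with $X\psi$ true at $j$ only if $j+1$ is a position of the sequence. An infinite trace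 is said to satisfy an LTL$_f$ formula if some finite prefix of it satisfies it. An infinite trace is state-action fair if for every $(s,a,s')\in Tr$, if the pair $s,a$ (state $s$ with action $a$) occurs infinitely often then the step $s,a$ followed by state $s'$ occurs infinitely often. $(D,f)\models A^{\text{sa-fair}}\psi$ means every infinite state-action fair $f$-trace satisfies $\psi$. For a stochastic domain, $D$ and $f$ induce a Markov chain and hence a probability measure on infinite $f$-traces; $(D,f)\models A^{=1}\psi$ means the set of infinite $f$-traces satisfying $\psi$ has probability $1$. This does not depend on the actual probabilities but only on their supports, so for a nondeterministic domain $D$, $(D,f)\models A^{=1}\psi$ is defined as $(D',f)\models A^{=1}\psi$ for any stochastic domain $D'$ whose induced nondeterministic domain is $D$. *)

theory Defs
  imports "HOL-Probability.Probability"
begin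

text \<open>Fluents have type 'f, action variables type 'v; states are 'f sets, actions 'v sets.
  The atomic propositions are AP = F \<union> A, rendered as the disjoint sum 'f + 'v.
  A domain is given by its initial state s0 and transition relation Tr.\<close>

definition applicable :: "('s \<times> 'a \<times> 's) set \<Rightarrow> 's \<Rightarrow> 'a \<Rightarrow> bool" where
  "applicable Tr s a \<longleftrightarrow> {s'. (s, a, s') \<in> Tr} \<noteq> {}"

definition planning_domain :: "('s \<times> 'a \<times> 's) set \<Rightarrow> bool" where
  "planning_domain Tr \<longleftrightarrow> (\<forall>s. \<exists>a. applicable Tr s a)"

definition stochastic_for :: "('s \<times> 'a \<times> 's) set \<Rightarrow> ('s \<Rightarrow> 'a \<Rightarrow> 's pmf) \<Rightarrow> bool" where
  "stochastic_for Tr Pr \<longleftrightarrow>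
     (\<forall>s a. applicable Tr s a \<longrightarrow> set_pmf (Pr s a) = {s'. (s, a, s') \<in> Tr})"

definition is_policy :: "('s \<times> 'a \<times> 's) set \<Rightarrow> ('s list \<Rightarrow> 'a) \<Rightarrow> bool" where
  "is_policy Tr f \<longleftrightarrow> (\<forall>u. u \<noteq> [] \<longrightarrow> applicable Tr (last u) (f u))"

definition finite_state_policy :: "('s list \<Rightarrow> 'a) \<Rightarrow> bool" where
  "finite_state_policy f \<longleftrightarrow>
     (\<exists>(Q :: nat set) q0 (\<delta> :: nat \<Rightarrow> 's \<Rightarrow> nat) (out :: nat \<Rightarrow> 'a).
        finite Q \<and> q0 \<in> Q \<and> (\<forall>q\<in>Q. \<forall>s. \<delta> q s \<in> Q) \<and>
        (\<forall>u. u \<noteq> [] \<longrightarrow> f u = out (foldl \<delta> q0 u)))"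

text \<open>Infinite traces are streams of (state, action) pairs (s_i, a_i).\<close>
definition inf_f_trace ::
  "'s \<Rightarrow> ('s \<times> 'a \<times> 's) set \<Rightarrow> ('s list \<Rightarrow> 'a) \<Rightarrow> ('s \<times> 'a) stream \<Rightarrow> bool" where
  "inf_f_trace s0 Tr f \<omega> \<longleftrightarrow>
     fst (\<omega> !! 0) = s0 \<and>
     (\<forall>i. (fst (\<omega> !! i), snd (\<omega> !! i), fst (\<omega> !! Suc i)) \<in> Tr) \<and>
     (\<forall>i. snd (\<omega> !! i) = f (map fst (stake (Suc i) \<omega>)))"

definition sa_fair :: "('s \<times> 'a \<times> 's) set \<Rightarrow> ('s \<times> 'a) stream \<Rightarrow> bool" where
  "sa_fair Tr \<omega> \<longleftrightarrow>
     (\<forall>s a s'. (s, a, s') \<in> Tr \<longrightarrow>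
        infinite {i. \<omega> !! i = (s, a)} \<longrightarrow>
        infinite {i. \<omega> !! i = (s, a) \<and> fst (\<omega> !! Suc i) = s'})"

definition letter :: "'f set \<times> 'v set \<Rightarrow> ('f + 'v) set" where
  "letter x = Inl ` fst x \<union> Inr ` snd x"

datatype 'p ltl = Prop 'p | Neg "'p ltl" | Conj "'p ltl" "'p ltl" | Next "'p ltl" | Until "'p ltl" "'p ltl"

primrec ltl_sat :: "(nat \<Rightarrow> 'p set) \<Rightarrow> nat \<Rightarrow> 'p ltl \<Rightarrow> bool" where
  "ltl_sat w j (Prop p) \<longleftrightarrow> p \<in> w j"
| "ltl_sat w j (Neg \<phi>) \<longleftrightarrow> \<not> ltl_sat w j \<phi>"
| "ltl_sat w j (Conj \<phi> \<psi>) \<longleftrightarrow> ltl_sat w j \<phi> \<and> ltl_sat w j \<psi>"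
| "ltl_sat w j (Next \<phi>) \<longleftrightarrow> ltl_sat w (Suc j) \<phi>"
| "ltl_sat w j (Until \<phi> \<psi>) \<longleftrightarrow> (\<exists>k\<ge>j. ltl_sat w k \<psi> \<and> (\<forall>i. j \<le> i \<and> i < k \<longrightarrow> ltl_sat w i \<phi>))"

primrec ltlf_sat :: "'p set list \<Rightarrow> nat \<Rightarrow> 'p ltl \<Rightarrow> bool" where
  "ltlf_sat w j (Prop p) \<longleftrightarrow> p \<in> w ! j"
| "ltlf_sat w j (Neg \<phi>) \<longleftrightarrow> \<not> ltlf_sat w j \<phi>"
| "ltlf_sat w j (Conj \<phi> \<psi>) \<longleftrightarrow> ltlf_sat w j \<phi> \<and> ltlf_sat w j \<psi>"
| "ltlf_sat w j (Next \<phi>) \<longleftrightarrow> Suc j < length w \<and> ltlf_sat w (Suc j) \<phi>"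
| "ltlf_sat w j (Until \<phi> \<psi>) \<longleftrightarrow>
     (\<exists>k. j \<le> k \<and> k < length w \<and> ltlf_sat w k \<psi> \<and> (\<forall>i. j \<le> i \<and> i < k \<longrightarrow> ltlf_sat w i \<phi>))"

datatype 'p goal = LTL "'p ltl" | LTLf "'p ltl"

fun goal_sat :: "'p goal \<Rightarrow> (nat \<Rightarrow> 'p set) \<Rightarrow> bool" where
  "goal_sat (LTL \<phi>) w \<longleftrightarrow> ltl_sat w 0 \<phi>"
| "goal_sat (LTLf \<phi>) w \<longleftrightarrow> (\<exists>n>0. ltlf_sat (map w [0..<n]) 0 \<phi>)"

definition trace_sat :: "('f + 'v) goal \<Rightarrow> ('f set \<times> 'v set) stream \<Rightarrow> bool" where
  "trace_sat \<psi> \<omega> \<longleftrightarrow> goal_sat \<psi> (\<lambda>i. letter (\<omega> !! i))"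

definition A_sa_fair ::
  "'f set \<Rightarrow> ('f set \<times> 'v set \<times> 'f set) set \<Rightarrow> ('f set list \<Rightarrow> 'v set) \<Rightarrow> ('f + 'v) goal \<Rightarrow> bool" where
  "A_sa_fair s0 Tr f \<psi> \<longleftrightarrow>
     (\<forall>\<omega>. inf_f_trace s0 Tr f \<omega> \<and> sa_fair Tr \<omega> \<longrightarrow> trace_sat \<psi> \<omega>)"

text \<open>Probability of the cylinder of a finite prefix w = (s0,a0)...(sn,an) in the Markov chain
  induced by the domain, Pr and f.\<close>
definition cyl_prob ::
  "'s \<Rightarrow> ('s \<Rightarrow> 'a \<Rightarrow> 's pmf) \<Rightarrow> ('s list \<Rightarrow> 'a) \<Rightarrow> ('s \<times> 'a) list \<Rightarrow> real" where
  "cyl_prob s0 Pr f w =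
     (if fst (w ! 0) = s0 \<and> (\<forall>i<length w. snd (w ! i) = f (map fst (take (Suc i) w)))
      then (\<Prod>i<length w - 1. pmf (Pr (fst (w ! i)) (snd (w ! i))) (fst (w ! Suc i)))
      else 0)"

text \<open>M is the (unique) probability measure on infinite traces induced by the Markov chain:
  it lives on the stream sigma-algebra and gives each prefix cylinder its chain probability.\<close>
definition trace_measure ::
  "'s \<Rightarrow> ('s \<Rightarrow> 'a \<Rightarrow> 's pmf) \<Rightarrow> ('s list \<Rightarrow> 'a) \<Rightarrow> ('s \<times> 'a) stream measure \<Rightarrow> bool" where
  "trace_measure s0 Pr f M \<longleftrightarrow>
     prob_space M \<and> sets M = sets (stream_space (count_space UNIV)) \<and>
     (\<forall>w. w \<noteq> [] \<longrightarrow>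
        emeasure M {\<omega> \<in> space M. stake (length w) \<omega> = w} = ennreal (cyl_prob s0 Pr f w))"

definition A_almost_sure ::
  "'f set \<Rightarrow> ('f set \<times> 'v set \<times> 'f set) set \<Rightarrow> ('f set list \<Rightarrow> 'v set) \<Rightarrow> ('f + 'v) goal \<Rightarrow> bool" where
  "A_almost_sure s0 Tr f \<psi> \<longleftrightarrow>
     (\<forall>Pr M. stochastic_for Tr Pr \<longrightarrow> trace_measure s0 Pr f M \<longrightarrow>
        emeasure M {\<omega> \<in> space M. inf_f_trace s0 Tr f \<omega> \<and> trace_sat \<psi> \<omega>} = 1)"

end

theory Submission
  imports Defs
begin

text \<open>In the Markov chain induced by a stochastic domain and the policy f, prefixes of probability
  zero almost surely do not occur, so almost every trace is an f-trace. Almost every trace is also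
  state-action fair: if the step from (s, a) to s' has probability p > 0, the traces that visit
  (s, a) at least k times from position N on without ever moving from it to s' have probability at
  most (1 - p)^k, which follows from a supermartingale on finite prefixes. Letting k grow and
  taking countable unions over N and over the transitions gives fairness almost surely, and with
  it \<psi>.\<close>

section \<open>Measurability\<close>

lemma stake_eq_map_snth: "stake n \<omega> = map ((!!) \<omega>) [0..<n]"
  by (induct n) (simp_all add: stake_Suc del: stake.simps(2))

lemma pred_stake:
  "Measurable.pred (stream_space (count_space UNIV)) (\<lambda>\<omega>::'a::countable stream. P (stake n \<omega>))"
  by measurable

lemma pred_ltl_sat:
  "Measurable.pred (stream_space (count_space UNIV))
     (\<lambda>\<omega>::('f::finite set \<times> 'v::finite set) stream. ltl_sat (\<lambda>i. letter (\<omega> !! i)) j \<phi>)"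
  by (induction \<phi> arbitrary: j) (simp_all, measurable)

lemma pred_trace_sat:
  "Measurable.pred (stream_space (count_space UNIV))
     (\<lambda>\<omega>::('f::finite set \<times> 'v::finite set) stream. trace_sat \<psi> \<omega>)"
proof (cases \<psi>)
  case (LTL \<phi>)
  then show ?thesis unfolding trace_sat_def using pred_ltl_sat by simp
next
  case (LTLf \<phi>)
  have "map (\<lambda>i. letter (\<omega> !! i)) [0..<n] = map letter (stake n \<omega>)"
    for \<omega> :: "('f set \<times> 'v set) stream" and n
    by (simp add: stake_eq_map_snth)
  then show ?thesis unfolding trace_sat_def using LTLf by simp measurable
qed

lemma pred_inf_f_trace:
  "Measurable.pred (stream_space (count_space UNIV))
     (\<lambda>\<omega>::('s::countable \<times> 'a::countable) stream. inf_f_trace s0 Tr f \<omega>)"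
proof -
  have "inf_f_trace s0 Tr f \<omega> \<longleftrightarrow> (\<lambda>w. fst (w ! 0) = s0) (stake 1 \<omega>) \<and>
     (\<forall>i. (\<lambda>w. (fst (w ! i), snd (w ! i), fst (w ! Suc i)) \<in> Tr) (stake (Suc (Suc i)) \<omega>)) \<and>
     (\<forall>i. (\<lambda>w. snd (w ! i) = f (map fst w)) (stake (Suc i) \<omega>))" for \<omega> :: "('s \<times> 'a) stream"
    unfolding inf_f_trace_def by (simp del: stake.simps(2))
  then show ?thesis
    by (simp only:) (intro pred_intros_logic pred_intros_countable pred_stake)
qed

section \<open>Visits in prefixes and streams\<close>

text \<open>Only visits whose successor is already part of w are counted, so that w determines whether
  they step to a given state.\<close>

definition visits :: "nat \<Rightarrow> 'b \<Rightarrow> 'b list \<Rightarrow> nat set" where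
  "visits N x w = {i. N \<le> i \<and> Suc i < length w \<and> w ! i = x}"

definition no_step_to :: "nat \<Rightarrow> 's \<times> 'a \<Rightarrow> 's \<Rightarrow> ('s \<times> 'a) list \<Rightarrow> bool" where
  "no_step_to N x t w \<longleftrightarrow> (\<forall>i\<in>visits N x w. fst (w ! Suc i) \<noteq> t)"

lemma finite_visits [simp]: "finite (visits N x w)"
  unfolding visits_def by (rule finite_subset[of _ "{..<length w}"]) auto

lemma visits_singleton: "visits N x [y] = {}"
  unfolding visits_def by simp

lemma visits_snoc:
  assumes "w \<noteq> []"
  shows "visits N x (w @ [y]) =
    visits N x w \<union> (if N \<le> length w - 1 \<and> last w = x then {length w - 1} else {})"
proof -
  have "i \<in> visits N x (w @ [y]) \<longleftrightarrow> i \<in> visits N x w \<or> (i = length w - 1 \<and> N \<le> i \<and> last w = x)" for i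
  proof (cases "Suc i < length w")
    case True
    then show ?thesis using assms unfolding visits_def by (auto simp: nth_append last_conv_nth)
  next
    case False
    then show ?thesis using assms unfolding visits_def
      by (cases "i = length w - 1") (auto simp: nth_append last_conv_nth)
  qed
  then show ?thesis by auto
qed

lemma card_visits_snoc:
  assumes "w \<noteq> []"
  shows "card (visits N x (w @ [y])) =
    card (visits N x w) + (if N \<le> length w - 1 \<and> last w = x then 1 else 0)"
proof -
  have "length w - 1 \<notin> visits N x w" using assms unfolding visits_def by auto
  then show ?thesis unfolding visits_snoc[OF assms] by simp
qed

lemma no_step_to_snoc:
  assumes "w \<noteq> []"
  shows "no_step_to N x t (w @ [y]) \<longleftrightarrow>
    no_step_to N x t w \<and> (N \<le> length w - 1 \<and> last w = x \<longrightarrow> fst y \<noteq> t)"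
proof -
  have "(w @ [y]) ! Suc i = w ! Suc i" if "i \<in> visits N x w" for i
    using that unfolding visits_def by (simp add: nth_append)
  moreover have "(w @ [y]) ! Suc (length w - 1) = y" using assms by (simp add: nth_append)
  ultimately show ?thesis
    unfolding no_step_to_def visits_snoc[OF assms] by auto
qed

definition never_steps_to :: "nat \<Rightarrow> 's \<times> 'a \<Rightarrow> 's \<Rightarrow> ('s \<times> 'a) stream \<Rightarrow> bool" where
  "never_steps_to N x t \<omega> \<longleftrightarrow> (\<forall>i\<ge>N. \<omega> !! i = x \<longrightarrow> fst (\<omega> !! Suc i) \<noteq> t)"

lemma visits_stake: "visits N x (stake T \<omega>) = {i. N \<le> i \<and> Suc i < T \<and> \<omega> !! i = x}"
  unfolding visits_def by auto

lemma card_visits_stake_mono: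
  "T \<le> T' \<Longrightarrow> card (visits N x (stake T \<omega>)) \<le> card (visits N x (stake T' \<omega>))"
  by (rule card_mono[OF finite_visits]) (auto simp: visits_stake)

lemma infinite_snth_imp_many_visits:
  assumes "infinite {i. \<omega> !! i = x}"
  obtains T where "k \<le> card (visits N x (stake T \<omega>))"
proof -
  have "{i. \<omega> !! i = x} \<subseteq> {i. N \<le> i \<and> \<omega> !! i = x} \<union> {..<N}" by auto
  then have "infinite {i. N \<le> i \<and> \<omega> !! i = x}"
    using assms finite_subset by blast
  then obtain B where B: "finite B" "card B = k" "B \<subseteq> {i. N \<le> i \<and> \<omega> !! i = x}"
    using infinite_arbitrarily_large by blast
  have "B \<subseteq> visits N x (stake (Suc (Suc (Sup B))) \<omega>)"
    using B by (auto simp: visits_stake le_cSup_finite less_Suc_eq_le simp del: stake.simps(2))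
  then have "k \<le> card (visits N x (stake (Suc (Suc (Sup B))) \<omega>))"
    using B(2) by (auto intro: card_mono)
  then show ?thesis by (rule that)
qed

lemma never_steps_to_imp_no_step_to_stake:
  "never_steps_to N x t \<omega> \<Longrightarrow> no_step_to N x t (stake T \<omega>)"
  unfolding never_steps_to_def no_step_to_def visits_stake by simp

section \<open>Cylinder probabilities and a supermartingale\<close>

lemma cyl_prob_nonneg: "0 \<le> cyl_prob s0 Pr f w"
  unfolding cyl_prob_def by (auto intro: prod_nonneg)

lemma cyl_prob_singleton: "cyl_prob s0 Pr f [x] = (if x = (s0, f [s0]) then 1 else 0)"
  unfolding cyl_prob_def by (cases x) auto

lemma cyl_prob_neq_0D:
  assumes "cyl_prob s0 Pr f w \<noteq> 0"
  shows "fst (w ! 0) = s0"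
    and "i < length w \<Longrightarrow> snd (w ! i) = f (map fst (take (Suc i) w))"
    and "Suc i < length w \<Longrightarrow> fst (w ! Suc i) \<in> set_pmf (Pr (fst (w ! i)) (snd (w ! i)))"
  using assms unfolding cyl_prob_def by (auto simp: set_pmf_iff split: if_splits)

lemma cyl_prob_snoc:
  assumes "w \<noteq> []"
  shows "cyl_prob s0 Pr f (w @ [x]) =
    (if snd x = f (map fst w @ [fst x])
     then cyl_prob s0 Pr f w * pmf (Pr (fst (last w)) (snd (last w))) (fst x) else 0)"
proof -
  let ?step = "\<lambda>v i. pmf (Pr (fst (v ! i)) (snd (v ! i))) (fst (v ! Suc i))"
  obtain m where m: "length w = Suc m" using assms by (cases w) auto
  have head: "(w @ [x]) ! 0 = w ! 0"
    using m by (simp add: nth_append)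
  have policy_snoc:
    "(\<forall>i<length (w @ [x]). snd ((w @ [x]) ! i) = f (map fst (take (Suc i) (w @ [x])))) \<longleftrightarrow>
     (\<forall>i<length w. snd (w ! i) = f (map fst (take (Suc i) w))) \<and> snd x = f (map fst w @ [fst x])"
    by (auto simp: less_Suc_eq nth_append)
  have "(\<Prod>i<length (w @ [x]) - 1. ?step (w @ [x]) i) = (\<Prod>i<Suc m. ?step (w @ [x]) i)"
    using m by simp
  also have "\<dots> = (\<Prod>i<m. ?step (w @ [x]) i) * ?step (w @ [x]) m"
    by simp
  also have "(\<Prod>i<m. ?step (w @ [x]) i) = (\<Prod>i<length w - 1. ?step w i)"
    by (rule prod.cong) (use m in \<open>auto simp: nth_append\<close>)
  also have "?step (w @ [x]) m = pmf (Pr (fst (last w)) (snd (last w))) (fst x)"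
    using assms m by (simp add: nth_append last_conv_nth)
  finally show ?thesis
    unfolding cyl_prob_def head policy_snoc by auto
qed

lemma sum_lists_length_Suc:
  fixes g :: "'b::finite list \<Rightarrow> 'c::comm_monoid_add"
  shows "(\<Sum>w | length w = Suc n. g w) = (\<Sum>w | length w = n. \<Sum>x\<in>UNIV. g (w @ [x]))"
proof -
  have "v \<in> (\<lambda>p. fst p @ [snd p]) ` ({w. length w = n} \<times> UNIV)" if "length v = Suc n" for v :: "'b list"
    using that by (cases v rule: rev_cases) (auto intro: image_eqI[where x="(_, _)"])
  then have "{w :: 'b list. length w = Suc n} = (\<lambda>p. fst p @ [snd p]) ` ({w. length w = n} \<times> UNIV)"
    by auto
  moreover have "inj_on (\<lambda>p. fst p @ [snd p]) ({w. length w = n} \<times> (UNIV :: 'b set))"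
    by (auto simp: inj_on_def)
  ultimately show ?thesis
    by (simp add: sum.reindex sum.cartesian_product split_def)
qed

lemma sum_cyl_prob_snoc:
  fixes w :: "('s::finite \<times> 'a::finite) list"
  assumes "w \<noteq> []"
  shows "(\<Sum>x\<in>UNIV. cyl_prob s0 Pr f (w @ [x]) * h (fst x)) =
     cyl_prob s0 Pr f w * (\<Sum>t\<in>UNIV. pmf (Pr (fst (last w)) (snd (last w))) t * h t)"
proof -
  let ?P = "Pr (fst (last w)) (snd (last w))"
  have "(\<Sum>x\<in>UNIV. cyl_prob s0 Pr f (w @ [x]) * h (fst x)) =
        (\<Sum>t\<in>UNIV. \<Sum>b\<in>UNIV. cyl_prob s0 Pr f (w @ [(t, b)]) * h t)"
    by (simp add: UNIV_Times_UNIV[symmetric] sum.cartesian_product split_def del: UNIV_Times_UNIV)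
  also have "\<dots> = (\<Sum>t\<in>UNIV. cyl_prob s0 Pr f w * pmf ?P t * h t)"
    by (simp add: cyl_prob_snoc[OF assms] if_distrib[where f="\<lambda>z. z * _"] cong: if_cong)
  finally show ?thesis by (simp add: sum_distrib_left mult.assoc)
qed

lemma sum_pmf_UNIV: "(\<Sum>u\<in>(UNIV::'s::finite set). pmf P u) = 1"
  by (rule sum_pmf_eq_1) auto

lemma sum_pmf_times_if_neq:
  "(\<Sum>u\<in>(UNIV::'s::finite set). pmf P u * (if u \<noteq> t then c else 0)) = (1 - pmf P t) * c"
proof -
  have "(\<Sum>u\<in>UNIV. pmf P u * (if u \<noteq> t then c else 0)) = (\<Sum>u\<in>UNIV - {t}. pmf P u) * c"
    by (subst sum.remove[of _ t]) (auto simp: sum_distrib_right intro!: sum.cong)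
  also have "(\<Sum>u\<in>UNIV - {t}. pmf P u) = 1 - pmf P t"
    using sum.remove[of UNIV t "pmf P"] sum_pmf_UNIV[of P] by simp
  finally show ?thesis .
qed

lemma mult_power_diff_Suc_le:
  fixes q :: real
  assumes "0 \<le> q" and "q \<le> 1"
  shows "q * q ^ (k - Suc c) \<le> q ^ (k - c)"
proof (cases "c < k")
  case True
  then have "k - c = Suc (k - Suc c)" by simp
  then show ?thesis by simp
qed (use assms in simp)

context
  fixes s0 :: "'s::finite" and Pr :: "'s \<Rightarrow> 'a::finite \<Rightarrow> 's pmf" and f :: "'s list \<Rightarrow> 'a"
    and N :: nat and x :: "'s \<times> 'a" and t :: 's
begin

text \<open>The second factor bounds the probability, given the prefix w, of completing k visits of x
  from position N on without ever stepping from x to t, since each further visit avoids t with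
  probability 1 - Pr x t. On prefixes that are already bad the potential equals their cylinder
  probability, which is how the supermartingale property bounds their total probability.\<close>

definition potential :: "nat \<Rightarrow> ('s \<times> 'a) list \<Rightarrow> real" where
  "potential k w = cyl_prob s0 Pr f w *
     (if no_step_to N x t w then (1 - pmf (Pr (fst x) (snd x)) t) ^ (k - card (visits N x w)) else 0)"

lemma potential_nonneg: "0 \<le> potential k w"
  unfolding potential_def by (simp add: cyl_prob_nonneg pmf_le_1)

lemma sum_potential_snoc_le:
  assumes "w \<noteq> []"
  shows "(\<Sum>y\<in>UNIV. potential k (w @ [y])) \<le> potential k w"
proof -
  let ?q = "1 - pmf (Pr (fst x) (snd x)) t"
  let ?P = "Pr (fst (last w)) (snd (last w))"
  let ?visit = "N \<le> length w - 1 \<and> last w = x"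
  let ?c = "card (visits N x w)"
  define h where "h u = (if no_step_to N x t w \<and> (?visit \<longrightarrow> u \<noteq> t)
      then ?q ^ (k - (?c + (if ?visit then 1 else 0))) else 0)" for u
  have "potential k (w @ [y]) = cyl_prob s0 Pr f (w @ [y]) * h (fst y)" for y
    unfolding potential_def h_def no_step_to_snoc[OF assms] card_visits_snoc[OF assms] by simp
  then have "(\<Sum>y\<in>UNIV. potential k (w @ [y])) = cyl_prob s0 Pr f w * (\<Sum>u\<in>UNIV. pmf ?P u * h u)"
    using sum_cyl_prob_snoc[OF assms, of s0 Pr f h] by simp
  also have "\<dots> \<le> potential k w"
  proof (cases "no_step_to N x t w")
    case False
    then show ?thesis unfolding h_def potential_def by simp
  next
    case True
    have "(\<Sum>u\<in>UNIV. pmf ?P u * h u) \<le> ?q ^ (k - ?c)"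
    proof (cases ?visit)
      case False
      then have "h u = ?q ^ (k - ?c)" for u
        using True unfolding h_def by auto
      then show ?thesis
        by (simp add: sum_distrib_right[symmetric] sum_pmf_UNIV)
    next
      case visit: True
      then have "(\<Sum>u\<in>UNIV. pmf ?P u * h u) = ?q * ?q ^ (k - Suc ?c)"
        using True sum_pmf_times_if_neq[of "Pr (fst x) (snd x)" t] by (simp add: h_def)
      also have "\<dots> \<le> ?q ^ (k - ?c)"
        by (rule mult_power_diff_Suc_le) (simp_all add: pmf_le_1)
      finally show ?thesis .
    qed
    then show ?thesis
      using True unfolding potential_def by (simp add: cyl_prob_nonneg mult_left_mono)
  qed
  finally show ?thesis .
qed

lemma sum_potential_le:
  assumes "1 \<le> T"
  shows "(\<Sum>w | length w = T. potential k w) \<le> (1 - pmf (Pr (fst x) (snd x)) t) ^ k"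
  using assms
proof (induction T rule: dec_induct)
  case base
  have "(\<Sum>w | length w = Suc 0. potential k w) =
      (\<Sum>y\<in>UNIV. (if y = (s0, f [s0]) then 1 else 0) * (1 - pmf (Pr (fst x) (snd x)) t) ^ k)"
    by (simp add: sum_lists_length_Suc potential_def cyl_prob_singleton no_step_to_def visits_singleton)
  then show ?case
    by (simp add: if_distrib[where f="\<lambda>z. z * _"] cong: if_cong)
next
  case (step T)
  have "(\<Sum>w | length w = Suc T. potential k w) = (\<Sum>w | length w = T. \<Sum>y\<in>UNIV. potential k (w @ [y]))"
    by (rule sum_lists_length_Suc)
  also have "\<dots> \<le> (\<Sum>w | length w = T. potential k w)"
    using step.hyps by (intro sum_mono sum_potential_snoc_le) auto
  finally show ?case using step.IH by linarith
qed

lemma sum_cyl_prob_no_step_to_le: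
  assumes "1 \<le> T"
  shows "(\<Sum>w | length w = T \<and> no_step_to N x t w \<and> k \<le> card (visits N x w). cyl_prob s0 Pr f w)
     \<le> (1 - pmf (Pr (fst x) (snd x)) t) ^ k"
proof -
  have "(\<Sum>w | length w = T \<and> no_step_to N x t w \<and> k \<le> card (visits N x w). cyl_prob s0 Pr f w)
     = (\<Sum>w | length w = T \<and> no_step_to N x t w \<and> k \<le> card (visits N x w). potential k w)"
    by (rule sum.cong) (auto simp: potential_def)
  also have "\<dots> \<le> (\<Sum>w | length w = T. potential k w)"
    using finite_lists_length_eq[of "UNIV :: ('s \<times> 'a) set" T]
    by (intro sum_mono2) (auto simp: potential_nonneg)
  also have "\<dots> \<le> (1 - pmf (Pr (fst x) (snd x)) t) ^ k"
    by (rule sum_potential_le[OF assms])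
  finally show ?thesis .
qed

end

section \<open>The induced Markov chain\<close>

locale induced_chain =
  fixes s0 :: "'s::finite" and Pr :: "'s \<Rightarrow> 'a::finite \<Rightarrow> 's pmf" and f :: "'s list \<Rightarrow> 'a"
    and M :: "('s \<times> 'a) stream measure"
  assumes trace_measure: "trace_measure s0 Pr f M"
begin

sublocale prob_space M
  using trace_measure unfolding trace_measure_def by simp

lemma sets_M: "sets M = sets (stream_space (count_space UNIV))"
  using trace_measure unfolding trace_measure_def by simp

lemma sets_Collect_pred:
  assumes "Measurable.pred (stream_space (count_space UNIV)) P"
  shows "{\<omega> \<in> space M. P \<omega>} \<in> sets M"
  using assms sets_eq_imp_space_eq[OF sets_M] unfolding pred_def sets_M by simp

lemma sets_Collect_stake: "{\<omega> \<in> space M. P (stake n \<omega>)} \<in> sets M"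
  by (rule sets_Collect_pred) measurable

lemma emeasure_Collect_stake:
  assumes "1 \<le> n"
  shows "emeasure M {\<omega> \<in> space M. P (stake n \<omega>)} =
    ennreal (\<Sum>w | length w = n \<and> P w. cyl_prob s0 Pr f w)"
proof -
  let ?W = "{w. length w = n \<and> P w}"
  let ?cyl = "\<lambda>w. {\<omega> \<in> space M. stake (length w) \<omega> = w}"
  have "{\<omega> \<in> space M. P (stake n \<omega>)} = (\<Union>w\<in>?W. ?cyl w)"
    by auto
  moreover have "emeasure M (\<Union>w\<in>?W. ?cyl w) = (\<Sum>w\<in>?W. emeasure M (?cyl w))"
  proof (rule sum_emeasure[symmetric])
    show "?cyl ` ?W \<subseteq> sets M" using sets_Collect_stake by auto
    show "disjoint_family_on ?cyl ?W" by (auto simp: disjoint_family_on_def)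
    show "finite ?W"
      using finite_lists_length_eq[of "UNIV :: ('s \<times> 'a) set" n] by (auto intro: finite_subset)
  qed
  moreover have "emeasure M (?cyl w) = ennreal (cyl_prob s0 Pr f w)" if "w \<in> ?W" for w
  proof -
    have "w \<noteq> []" using that assms by auto
    then show ?thesis using trace_measure unfolding trace_measure_def by simp
  qed
  ultimately show ?thesis by (simp add: cyl_prob_nonneg)
qed

lemma AE_cyl_prob_stake_neq_0: "AE \<omega> in M. \<forall>n. cyl_prob s0 Pr f (stake (Suc n) \<omega>) \<noteq> 0"
proof (subst AE_all_countable, intro allI)
  fix n
  have "emeasure M {\<omega> \<in> space M. cyl_prob s0 Pr f (stake (Suc n) \<omega>) = 0} = 0"
    by (subst emeasure_Collect_stake) (simp_all del: stake.simps(2))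
  then show "AE \<omega> in M. cyl_prob s0 Pr f (stake (Suc n) \<omega>) \<noteq> 0"
    using sets_Collect_stake
    by (subst AE_iff_null) (simp_all add: null_sets_def del: stake.simps(2))
qed

lemma AE_inf_f_trace:
  assumes "is_policy Tr f" and "stochastic_for Tr Pr"
  shows "AE \<omega> in M. inf_f_trace s0 Tr f \<omega>"
  using AE_cyl_prob_stake_neq_0
proof (rule eventually_mono)
  fix \<omega> :: "('s \<times> 'a) stream"
  assume pos: "\<forall>n. cyl_prob s0 Pr f (stake (Suc n) \<omega>) \<noteq> 0"
  have action: "snd (\<omega> !! i) = f (map fst (stake (Suc i) \<omega>))" for i
    using cyl_prob_neq_0D(2)[OF pos[rule_format, of i], of i] by (simp del: stake.simps(2))
  have "(fst (\<omega> !! i), snd (\<omega> !! i), fst (\<omega> !! Suc i)) \<in> Tr" for i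
  proof -
    have "last (map fst (stake (Suc i) \<omega>)) = fst (\<omega> !! i)"
      by (simp add: stake_Suc del: stake.simps(2))
    then have "applicable Tr (fst (\<omega> !! i)) (snd (\<omega> !! i))"
      using assms(1) action[of i] unfolding is_policy_def
      by (metis list.map_disc_iff stake_invert_Nil nat.distinct(1))
    moreover have "fst (\<omega> !! Suc i) \<in> set_pmf (Pr (fst (\<omega> !! i)) (snd (\<omega> !! i)))"
      using cyl_prob_neq_0D(3)[OF pos[rule_format, of "Suc i"], of i] by (simp del: stake.simps(2))
    ultimately show ?thesis
      using assms(2) unfolding stochastic_for_def by auto
  qed
  moreover have "fst (\<omega> !! 0) = s0"
    using cyl_prob_neq_0D(1)[OF pos[rule_format, of 0]] by simp
  ultimately show "inf_f_trace s0 Tr f \<omega>"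
    unfolding inf_f_trace_def using action by blast
qed

lemma sets_never_steps_to: "{\<omega> \<in> space M. never_steps_to N x t \<omega>} \<in> sets M"
proof -
  have "never_steps_to N x t \<omega> \<longleftrightarrow>
      (\<forall>i. (\<lambda>w. N \<le> i \<longrightarrow> w ! i = x \<longrightarrow> fst (w ! Suc i) \<noteq> t) (stake (Suc (Suc i)) \<omega>))" for \<omega>
    unfolding never_steps_to_def by (simp del: stake.simps(2))
  then show ?thesis
    by (simp only:) (intro sets_Collect_pred pred_intros_countable pred_stake)
qed

lemma sets_infinite_snth: "{\<omega> \<in> space M. infinite {i. \<omega> !! i = x}} \<in> sets M"
proof -
  have "infinite {i. \<omega> !! i = x} \<longleftrightarrow> (\<forall>m. \<exists>n. (\<lambda>w. m \<le> n \<and> w ! n = x) (stake (Suc n) \<omega>))" for \<omega>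
    by (simp add: infinite_nat_iff_unbounded_le del: stake.simps(2))
  then show ?thesis
    by (simp only:) (intro sets_Collect_pred pred_intros_countable pred_stake)
qed

lemma emeasure_never_steps_to_visits_le:
  "emeasure M {\<omega> \<in> space M. never_steps_to N x t \<omega> \<and> k \<le> card (visits N x (stake T \<omega>))}
     \<le> ennreal ((1 - pmf (Pr (fst x) (snd x)) t) ^ k)"
  (is "emeasure M ?A \<le> _")
proof -
  let ?bad = "\<lambda>w. no_step_to N x t w \<and> k \<le> card (visits N x w)"
  have "?A \<subseteq> {\<omega> \<in> space M. ?bad (stake (Suc T) \<omega>)}"
  proof
    fix \<omega> assume "\<omega> \<in> ?A"
    then show "\<omega> \<in> {\<omega> \<in> space M. ?bad (stake (Suc T) \<omega>)}"
      using card_visits_stake_mono[of T "Suc T" N x \<omega>]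
        never_steps_to_imp_no_step_to_stake[of N x t \<omega> "Suc T"]
      by (auto simp del: stake.simps(2))
  qed
  then have "emeasure M ?A \<le> emeasure M {\<omega> \<in> space M. ?bad (stake (Suc T) \<omega>)}"
    by (rule emeasure_mono[OF _ sets_Collect_stake])
  also have "\<dots> = ennreal (\<Sum>w | length w = Suc T \<and> ?bad w. cyl_prob s0 Pr f w)"
    by (rule emeasure_Collect_stake) simp
  also have "\<dots> \<le> ennreal ((1 - pmf (Pr (fst x) (snd x)) t) ^ k)"
    by (intro ennreal_leI sum_cyl_prob_no_step_to_le) simp
  finally show ?thesis .
qed

lemma emeasure_infinite_snth_never_steps_to_le:
  "emeasure M {\<omega> \<in> space M. infinite {i. \<omega> !! i = x} \<and> never_steps_to N x t \<omega>}
     \<le> ennreal ((1 - pmf (Pr (fst x) (snd x)) t) ^ k)"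
  (is "emeasure M ?B \<le> _")
proof -
  define A where
    "A T = {\<omega> \<in> space M. never_steps_to N x t \<omega> \<and> k \<le> card (visits N x (stake T \<omega>))}" for T
  have A_sets: "A T \<in> sets M" for T
  proof -
    have "A T = {\<omega> \<in> space M. never_steps_to N x t \<omega>} \<inter>
        {\<omega> \<in> space M. k \<le> card (visits N x (stake T \<omega>))}"
      unfolding A_def by auto
    then show ?thesis
      using sets_never_steps_to sets_Collect_stake by simp
  qed
  have "incseq A"
    unfolding incseq_def A_def by (auto intro: order.trans[OF _ card_visits_stake_mono])
  have "?B \<subseteq> (\<Union>T. A T)"
    unfolding A_def by (blast elim: infinite_snth_imp_many_visits)
  then have "emeasure M ?B \<le> emeasure M (\<Union>T. A T)"
    using A_sets by (intro emeasure_mono) auto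
  also have "\<dots> = (SUP T. emeasure M (A T))"
    using A_sets \<open>incseq A\<close> by (intro SUP_emeasure_incseq[symmetric]) auto
  also have "\<dots> \<le> ennreal ((1 - pmf (Pr (fst x) (snd x)) t) ^ k)"
    unfolding A_def by (intro SUP_least emeasure_never_steps_to_visits_le)
  finally show ?thesis .
qed

lemma AE_infinite_snth_imp_not_never_steps_to:
  assumes "0 < pmf (Pr (fst x) (snd x)) t"
  shows "AE \<omega> in M. infinite {i. \<omega> !! i = x} \<longrightarrow> \<not> never_steps_to N x t \<omega>"
proof -
  let ?B = "{\<omega> \<in> space M. infinite {i. \<omega> !! i = x} \<and> never_steps_to N x t \<omega>}"
  let ?q = "1 - pmf (Pr (fst x) (snd x)) t"
  have "measure M ?B \<le> ?q ^ k" for k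
    using emeasure_infinite_snth_never_steps_to_le[of x N t k]
    by (simp add: emeasure_eq_measure pmf_le_1)
  moreover have "(\<lambda>k. ?q ^ k) \<longlonglongrightarrow> 0"
    using assms by (intro LIMSEQ_power_zero) (simp add: pmf_le_1)
  ultimately have "measure M ?B \<le> 0"
    by (intro LIMSEQ_le_const) auto
  then have "measure M ?B = 0"
    using measure_nonneg[of M ?B] by linarith
  moreover have "?B = {\<omega> \<in> space M. infinite {i. \<omega> !! i = x}} \<inter> {\<omega> \<in> space M. never_steps_to N x t \<omega>}"
    by auto
  ultimately have "?B \<in> null_sets M"
    using sets_infinite_snth sets_never_steps_to by (simp add: null_sets_def emeasure_eq_measure)
  then show ?thesis
    by (rule AE_I') auto
qed

lemma AE_infinitely_often_step_to:
  assumes "0 < pmf (Pr (fst x) (snd x)) t"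
  shows "AE \<omega> in M. infinite {i. \<omega> !! i = x} \<longrightarrow> infinite {i. \<omega> !! i = x \<and> fst (\<omega> !! Suc i) = t}"
proof -
  have "AE \<omega> in M. \<forall>N. infinite {i. \<omega> !! i = x} \<longrightarrow> \<not> never_steps_to N x t \<omega>"
    using AE_infinite_snth_imp_not_never_steps_to[OF assms] by (subst AE_all_countable) blast
  then show ?thesis
    by (rule eventually_mono) (auto simp: infinite_nat_iff_unbounded_le never_steps_to_def)
qed

lemma AE_sa_fair:
  assumes "stochastic_for Tr Pr"
  shows "AE \<omega> in M. sa_fair Tr \<omega>"
proof -
  have "0 < pmf (Pr s a) s'" if "(s, a, s') \<in> Tr" for s a s'
  proof -
    have "applicable Tr s a" using that unfolding applicable_def by auto
    then have "s' \<in> set_pmf (Pr s a)"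
      using assms that unfolding stochastic_for_def by auto
    then show ?thesis by (simp add: pmf_positive)
  qed
  then have "AE \<omega> in M. \<forall>(s, a, s')\<in>Tr. infinite {i. \<omega> !! i = (s, a)} \<longrightarrow>
      infinite {i. \<omega> !! i = (s, a) \<and> fst (\<omega> !! Suc i) = s'}"
    using AE_infinitely_often_step_to[of "(_, _)"] by (subst AE_ball_countable) auto
  then show ?thesis
    by (rule eventually_mono) (auto simp: sa_fair_def)
qed

end

theorem proposition2:
  fixes s0 :: "'f::finite set"
    and Tr :: "('f set \<times> 'v::finite set \<times> 'f set) set"
    and f :: "'f set list \<Rightarrow> 'v set"
    and \<psi> :: "('f + 'v) goal"
  assumes "planning_domain Tr"
    and "is_policy Tr f"
    and "finite_state_policy f"
    and "A_sa_fair s0 Tr f \<psi>"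
  shows "A_almost_sure s0 Tr f \<psi>"
  unfolding A_almost_sure_def
proof (intro allI impI)
  fix Pr M
  assume "stochastic_for Tr Pr" and "trace_measure s0 Pr f M"
  then interpret induced_chain s0 Pr f M
    by unfold_locales
  let ?good = "{\<omega> \<in> space M. inf_f_trace s0 Tr f \<omega> \<and> trace_sat \<psi> \<omega>}"
  have "?good \<in> sets M"
    by (intro sets_Collect_pred pred_intros_logic pred_inf_f_trace pred_trace_sat)
  moreover have "AE \<omega> in M. \<omega> \<in> ?good"
    using AE_inf_f_trace[OF assms(2) \<open>stochastic_for Tr Pr\<close>] AE_sa_fair[OF \<open>stochastic_for Tr Pr\<close>] AE_space
    by eventually_elim (use assms(4) in \<open>auto simp: A_sa_fair_def\<close>)
  ultimately show "emeasure M ?good = 1"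
    by (rule emeasure_eq_1_AE)
qed

end
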